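(* Let $\beta\ge0$. If a symmetric restaking network $G$ admits a $\beta$-costly attack, then it admits a $\beta$-costly attack that is consolidated.
   Context: A restaking network is a tuple $G=(V,S,\sigma,w,\theta,\pi)$ with finite nonempty validator set $V$, finite service set $S$, stake $\sigma:V\to\mathbb{R}_{>0}$, allocation $w:V\times S\to\mathbb{R}_{\ge0}$ with $w(v,s)\le\sigma(v)$, thresholds $\theta:S\to[0,1]$, prizes $\pi:S\to\mathbb{R}_{>0}$. An attack is $\alpha:V\times S\to\mathbb{R}_{\ge0}$ with $\alpha(v,s)\le w(v,s)$; attacked services $S_\alpha=\{s:\sum_v\alpha(v,s)\ge\theta(s)\sum_v w(v,s)\}$; validator cost $c_v(\alpha)=\min(\sigma(v),\sum_{s\in S_\alpha}\alpha(v,s))$; total cost $C(\alpha)=\sum_vc_v(\alpha)$; prize $\Pi(\alpha)=\sum_{s\in S_\alpha}\pi(s)$. $\beta$-costly: $S_\alpha\ne\emptyset$ and $C(\alpha)\le\Pi(\alpha)+\beta$. $G$ is symmetric if all validators have the same stake $\sigma$, for each $s$ all validators have the same allocation $w(s)$, and all services have the same threshold $\theta$. Let $m=|V|$ and $V=\{v_1,\dots,v_m\}$ (any ordering). An attack is consolidated if for every $s\in S_\alpha$ and $i\in\{1,\dots,m\}$: $\alpha(v_i,s)=w(s)$ if $i\le\lfloor\theta m\rfloor$; $\alpha(v_i,s)=(\theta m-\lfloor\theta m\rfloor)w(s)$ if $i=\lfloor\theta m\rfloor+1$; $\alpha(v_i,s)=0$ otherwise. *)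

theory Defs
  imports Complex_Main
begin

definition restaking_network ::
  "'v set \<Rightarrow> 's set \<Rightarrow> ('v \<Rightarrow> real) \<Rightarrow> ('v \<Rightarrow> 's \<Rightarrow> real) \<Rightarrow> ('s \<Rightarrow> real) \<Rightarrow> ('s \<Rightarrow> real) \<Rightarrow> bool" where
  "restaking_network V S \<sigma> w \<theta> \<pi> \<longleftrightarrow>
     finite V \<and> V \<noteq> {} \<and> finite S \<and>
     (\<forall>v\<in>V. \<sigma> v > 0) \<and>
     (\<forall>v\<in>V. \<forall>s\<in>S. 0 \<le> w v s \<and> w v s \<le> \<sigma> v) \<and>
     (\<forall>s\<in>S. 0 \<le> \<theta> s \<and> \<theta> s \<le> 1) \<and>
     (\<forall>s\<in>S. \<pi> s > 0)"

definition is_attack ::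
  "'v set \<Rightarrow> 's set \<Rightarrow> ('v \<Rightarrow> 's \<Rightarrow> real) \<Rightarrow> ('v \<Rightarrow> 's \<Rightarrow> real) \<Rightarrow> bool" where
  "is_attack V S w \<alpha> \<longleftrightarrow> (\<forall>v\<in>V. \<forall>s\<in>S. 0 \<le> \<alpha> v s \<and> \<alpha> v s \<le> w v s)"

definition attacked ::
  "'v set \<Rightarrow> 's set \<Rightarrow> ('v \<Rightarrow> 's \<Rightarrow> real) \<Rightarrow> ('s \<Rightarrow> real) \<Rightarrow> ('v \<Rightarrow> 's \<Rightarrow> real) \<Rightarrow> 's set" where
  "attacked V S w \<theta> \<alpha> = {s\<in>S. (\<Sum>v\<in>V. \<alpha> v s) \<ge> \<theta> s * (\<Sum>v\<in>V. w v s)}"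

definition validator_cost ::
  "'v set \<Rightarrow> 's set \<Rightarrow> ('v \<Rightarrow> real) \<Rightarrow> ('v \<Rightarrow> 's \<Rightarrow> real) \<Rightarrow> ('s \<Rightarrow> real) \<Rightarrow> ('v \<Rightarrow> 's \<Rightarrow> real) \<Rightarrow> 'v \<Rightarrow> real" where
  "validator_cost V S \<sigma> w \<theta> \<alpha> v = min (\<sigma> v) (\<Sum>s\<in>attacked V S w \<theta> \<alpha>. \<alpha> v s)"

definition total_cost ::
  "'v set \<Rightarrow> 's set \<Rightarrow> ('v \<Rightarrow> real) \<Rightarrow> ('v \<Rightarrow> 's \<Rightarrow> real) \<Rightarrow> ('s \<Rightarrow> real) \<Rightarrow> ('v \<Rightarrow> 's \<Rightarrow> real) \<Rightarrow> real" where
  "total_cost V S \<sigma> w \<theta> \<alpha> = (\<Sum>v\<in>V. validator_cost V S \<sigma> w \<theta> \<alpha> v)"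

definition prize ::
  "'v set \<Rightarrow> 's set \<Rightarrow> ('v \<Rightarrow> 's \<Rightarrow> real) \<Rightarrow> ('s \<Rightarrow> real) \<Rightarrow> ('s \<Rightarrow> real) \<Rightarrow> ('v \<Rightarrow> 's \<Rightarrow> real) \<Rightarrow> real" where
  "prize V S w \<theta> \<pi> \<alpha> = (\<Sum>s\<in>attacked V S w \<theta> \<alpha>. \<pi> s)"

definition beta_costly ::
  "real \<Rightarrow> 'v set \<Rightarrow> 's set \<Rightarrow> ('v \<Rightarrow> real) \<Rightarrow> ('v \<Rightarrow> 's \<Rightarrow> real) \<Rightarrow> ('s \<Rightarrow> real) \<Rightarrow> ('s \<Rightarrow> real) \<Rightarrow> ('v \<Rightarrow> 's \<Rightarrow> real) \<Rightarrow> bool" where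
  "beta_costly \<beta> V S \<sigma> w \<theta> \<pi> \<alpha> \<longleftrightarrow>
     is_attack V S w \<alpha> \<and> attacked V S w \<theta> \<alpha> \<noteq> {} \<and>
     total_cost V S \<sigma> w \<theta> \<alpha> \<le> prize V S w \<theta> \<pi> \<alpha> + \<beta>"

definition symmetric_network ::
  "'v set \<Rightarrow> 's set \<Rightarrow> ('v \<Rightarrow> real) \<Rightarrow> ('v \<Rightarrow> 's \<Rightarrow> real) \<Rightarrow> ('s \<Rightarrow> real) \<Rightarrow> bool" where
  "symmetric_network V S \<sigma> w \<theta> \<longleftrightarrow>
     (\<forall>u\<in>V. \<forall>v\<in>V. \<sigma> u = \<sigma> v) \<and>
     (\<forall>s\<in>S. \<forall>u\<in>V. \<forall>v\<in>V. w u s = w v s) \<and>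
     (\<forall>s\<in>S. \<forall>t\<in>S. \<theta> s = \<theta> t)"

text \<open>Consolidated attack w.r.t. an enumeration e of V as e 1, ..., e m (m = card V).
  In a symmetric network w (e i) s is the common allocation w(s) and \<theta> s the common threshold.\<close>
definition consolidated ::
  "'v set \<Rightarrow> 's set \<Rightarrow> ('v \<Rightarrow> 's \<Rightarrow> real) \<Rightarrow> ('s \<Rightarrow> real) \<Rightarrow> (nat \<Rightarrow> 'v) \<Rightarrow> ('v \<Rightarrow> 's \<Rightarrow> real) \<Rightarrow> bool" where
  "consolidated V S w \<theta> e \<alpha> \<longleftrightarrow>
     (\<forall>s\<in>attacked V S w \<theta> \<alpha>. \<forall>i\<in>{1..card V}.
        \<alpha> (e i) s =
          (let t = \<theta> s * real (card V); k = nat \<lfloor>t\<rfloor> in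
           if i \<le> k then w (e i) s
           else if i = k + 1 then (t - of_int \<lfloor>t\<rfloor>) * w (e i) s
           else 0))"

end

theory Submission imports Defs begin

text \<open>Let T be the set of services attacked by a \<beta>-costly attack \<alpha>, and let A consist of T
  and the services whose threshold the zero attack already meets. With m validators, common
  threshold \<theta> and W the common allocation summed over A, the attack \<alpha> spends total weight
  at least \<theta> m W on A, while each validator contributes at most W. Truncation at the stake \<sigma>
  is concave, so the cost \<Sum>v min(\<sigma>, x v) of such a profile x is smallest when \<lfloor>\<theta> m\<rfloor>
  validators are saturated and one more takes the remainder: this is the consolidated attack
  on A. Its prize can only be larger, as T \<subseteq> A.\<close>

definition consolidation_weight :: "real \<Rightarrow> nat \<Rightarrow> real" where
  "consolidation_weight t i =
     (if i \<le> nat \<lfloor>t\<rfloor> then 1 else if i = nat \<lfloor>t\<rfloor> + 1 then frac t else 0)"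

lemma consolidation_weight_bounds: "0 \<le> consolidation_weight t i \<and> consolidation_weight t i \<le> 1"
  by (simp add: consolidation_weight_def frac_lt_1 less_imp_le)

lemma sum_threshold_step:
  "(\<Sum>i=1..m. (if i \<le> k then a else if i = k + 1 then b else (0::real)))
     = real (min m k) * a + (if k + 1 \<le> m then b else 0)"
proof (induction m)
  case (Suc m)
  then show ?case
    by (cases "Suc m \<le> k"; cases "Suc m = k + 1") (auto simp: algebra_simps min_def)
qed simp

lemma sum_consolidation_weight:
  fixes h :: "real \<Rightarrow> real"
  assumes "0 \<le> t" "t \<le> real m" "h 0 = 0"
  shows "(\<Sum>i=1..m. h (consolidation_weight t i)) = real (nat \<lfloor>t\<rfloor>) * h 1 + h (frac t)"
proof -
  define k where "k = nat \<lfloor>t\<rfloor>"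
  have k: "real k + frac t = t" using assms(1) by (simp add: k_def frac_def)
  have "k \<le> m" using k assms(2) frac_ge_0[of t] by linarith
  have "(\<Sum>i=1..m. h (consolidation_weight t i))
      = (\<Sum>i=1..m. (if i \<le> k then h 1 else if i = k + 1 then h (frac t) else 0))"
    by (rule sum.cong) (auto simp: consolidation_weight_def k_def assms(3))
  also have "\<dots> = real k * h 1 + (if k + 1 \<le> m then h (frac t) else 0)"
    using \<open>k \<le> m\<close> sum_threshold_step[where m = m and k = k and a = "h 1" and b = "h (frac t)"]
    by (simp add: min_def)
  also have "\<dots> = real k * h 1 + h (frac t)"
  proof -
    have "frac t = 0" if "\<not> k + 1 \<le> m"
    proof -
      have "real m \<le> real k" using that by simp
      then show ?thesis using k assms(2) frac_ge_0[of t] by linarith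
    qed
    then show ?thesis using assms(3) by (auto simp del: frac_eq_0_iff)
  qed
  finally show ?thesis by (simp add: k_def)
qed

lemma sum_consolidation_weight_linear:
  assumes "0 \<le> t" "t \<le> real m"
  shows "(\<Sum>i=1..m. consolidation_weight t i * c) = t * c"
proof -
  have "real (nat \<lfloor>t\<rfloor>) * c + frac t * c = t * c"
    using assms(1) by (simp add: frac_def algebra_simps)
  then show ?thesis using sum_consolidation_weight[OF assms, of "\<lambda>x. x * c"] by simp
qed

lemma sum_truncated_ge_saturated:
  fixes x :: "'v \<Rightarrow> real"
  assumes "finite V" and x: "\<forall>v\<in>V. 0 \<le> x v \<and> x v \<le> W" and "0 \<le> c" "0 \<le> W"
    and "0 \<le> f" "f \<le> 1" and total: "(real k + f) * W \<le> (\<Sum>v\<in>V. x v)"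
  shows "real k * min c W + min c (f * W) \<le> (\<Sum>v\<in>V. min c (x v))"
proof -
  define c' where "c' = min c W"
  define P where "P = {v\<in>V. c' \<le> x v}"
  have "P \<subseteq> V" "finite P" using \<open>finite V\<close> by (auto simp: P_def)
  define p where "p = card P"
  have split: "(\<Sum>v\<in>V. g v) = (\<Sum>v\<in>V-P. g v) + (\<Sum>v\<in>P. g v)" for g :: "'v \<Rightarrow> real"
    using sum.subset_diff[OF \<open>P \<subseteq> V\<close> \<open>finite V\<close>] by simp
  have capped: "real p * c' \<le> (\<Sum>v\<in>P. min c (x v))"
    using sum_mono[of P "\<lambda>_. c'" "\<lambda>v. min c (x v)"] by (simp add: p_def P_def c'_def)
  have uncapped: "(\<Sum>v\<in>V-P. min c (x v)) = (\<Sum>v\<in>V-P. x v)"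
    by (rule sum.cong) (auto simp: P_def c'_def)
  have "(\<Sum>v\<in>P. x v) \<le> real p * W"
    using sum_mono[of P x "\<lambda>_. W"] x \<open>P \<subseteq> V\<close> by (auto simp: p_def)
  moreover have "0 \<le> (\<Sum>v\<in>V-P. x v)" using x by (intro sum_nonneg) auto
  moreover have "0 \<le> c'" "c' \<le> W" "min c (f * W) \<le> c'" "min c (f * W) \<le> f * W"
    using assms mult_left_le_one_le[of W f] by (auto simp: c'_def)
  moreover have "(real k + 1) * c' \<le> real p * c' \<or> (real k - real p) * c' \<le> (real k - real p) * W"
    using \<open>0 \<le> c'\<close> \<open>c' \<le> W\<close> by (cases "k + 1 \<le> p") (auto intro: mult_right_mono mult_left_mono)
  ultimately show ?thesis
    using split[of x] split[of "\<lambda>v. min c (x v)"] capped uncapped total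
    unfolding c'_def[symmetric] by (auto simp: algebra_simps)
qed

locale symmetric_restaking =
  fixes V :: "'v set" and S :: "'s set" and \<sigma> :: "'v \<Rightarrow> real" and w :: "'v \<Rightarrow> 's \<Rightarrow> real"
    and \<theta> :: "'s \<Rightarrow> real" and \<pi> :: "'s \<Rightarrow> real" and e :: "nat \<Rightarrow> 'v"
  assumes network: "restaking_network V S \<sigma> w \<theta> \<pi>"
    and symmetric: "symmetric_network V S \<sigma> w \<theta>"
    and enumeration: "bij_betw e {1..card V} V"
begin

definition stake :: real where "stake = \<sigma> (SOME v. v \<in> V)"
definition alloc :: "'s \<Rightarrow> real" where "alloc s = w (SOME v. v \<in> V) s"
definition threshold :: real where "threshold = \<theta> (SOME s. s \<in> S)"
definition rank :: "'v \<Rightarrow> nat" where "rank = inv_into {1..card V} e"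

lemma finite_V: "finite V" and V_nonempty: "V \<noteq> {}" and finite_S: "finite S"
  using network by (auto simp: restaking_network_def)

lemma some_in_V: "(SOME v. v \<in> V) \<in> V"
  using V_nonempty by (simp add: some_in_eq)

lemma stake_eq: "v \<in> V \<Longrightarrow> \<sigma> v = stake"
  using symmetric some_in_V unfolding symmetric_network_def stake_def by blast

lemma alloc_eq: "v \<in> V \<Longrightarrow> s \<in> S \<Longrightarrow> w v s = alloc s"
  using symmetric some_in_V unfolding symmetric_network_def alloc_def by blast

lemma threshold_eq: "s \<in> S \<Longrightarrow> \<theta> s = threshold"
  using symmetric someI[of "\<lambda>s. s \<in> S" s] unfolding symmetric_network_def threshold_def by blast

lemma stake_nonneg: "0 \<le> stake"
  using network some_in_V by (simp add: restaking_network_def stake_def less_imp_le)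

lemma alloc_nonneg: "s \<in> S \<Longrightarrow> 0 \<le> alloc s"
  using network some_in_V by (simp add: restaking_network_def alloc_def)

lemma enumeration_in_V: "i \<in> {1..card V} \<Longrightarrow> e i \<in> V"
  using enumeration by (auto simp: bij_betw_def)

lemma rank_enumeration: "i \<in> {1..card V} \<Longrightarrow> rank (e i) = i"
  using enumeration by (auto simp: rank_def bij_betw_def)

lemma sum_V_enumeration: "(\<Sum>v\<in>V. g v) = (\<Sum>i=1..card V. g (e i))"
  using sum.reindex_bij_betw[OF enumeration, of g] by simp

lemma sum_alloc_V: "s \<in> S \<Longrightarrow> (\<Sum>v\<in>V. w v s) = real (card V) * alloc s"
  by (simp add: alloc_eq)

lemma level_bounds: "s \<in> S \<Longrightarrow> 0 \<le> \<theta> s * real (card V) \<and> \<theta> s * real (card V) \<le> real (card V)"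
  using network by (simp add: restaking_network_def mult_left_le_one_le)

definition trivially_attacked :: "'s set" where
  "trivially_attacked = {s\<in>S. \<theta> s * (\<Sum>v\<in>V. w v s) \<le> 0}"

definition consolidated_attack :: "'s set \<Rightarrow> 'v \<Rightarrow> 's \<Rightarrow> real" where
  "consolidated_attack A v s =
     (if s \<in> A then consolidation_weight (\<theta> s * real (card V)) (rank v) * w v s else 0)"

lemma consolidated_attack_enumeration:
  "i \<in> {1..card V} \<Longrightarrow> s \<in> A \<Longrightarrow>
     consolidated_attack A (e i) s = consolidation_weight (\<theta> s * real (card V)) i * w (e i) s"
  by (simp add: consolidated_attack_def rank_enumeration)

lemma is_attack_consolidated_attack: "is_attack V S w (consolidated_attack A)"
  using network consolidation_weight_bounds
  by (auto simp: is_attack_def restaking_network_def consolidated_attack_def mult_left_le_one_le)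

lemma sum_consolidated_attack:
  assumes "A \<subseteq> S" "s \<in> A"
  shows "(\<Sum>v\<in>V. consolidated_attack A v s) = \<theta> s * (\<Sum>v\<in>V. w v s)"
proof -
  have s: "s \<in> S" using assms by blast
  have "(\<Sum>v\<in>V. consolidated_attack A v s)
      = (\<Sum>i=1..card V. consolidation_weight (\<theta> s * real (card V)) i * alloc s)"
    unfolding sum_V_enumeration
    by (rule sum.cong) (use assms s in \<open>auto simp: consolidated_attack_enumeration
          alloc_eq enumeration_in_V\<close>)
  also have "\<dots> = \<theta> s * real (card V) * alloc s"
    using sum_consolidation_weight_linear level_bounds[OF s] by blast
  finally show ?thesis using sum_alloc_V[OF s] by simp
qed

lemma attacked_consolidated_attack:
  assumes "A \<subseteq> S" "trivially_attacked \<subseteq> A"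
  shows "attacked V S w \<theta> (consolidated_attack A) = A"
proof -
  have "s \<in> A" if "s \<in> S" "\<theta> s * (\<Sum>v\<in>V. w v s) \<le> (\<Sum>v\<in>V. consolidated_attack A v s)" for s
    using that assms(2) by (cases "s \<in> A") (auto simp: consolidated_attack_def trivially_attacked_def)
  then show ?thesis
    using assms(1) sum_consolidated_attack[OF assms(1)] by (auto simp: attacked_def)
qed

lemma consolidated_consolidated_attack:
  assumes "A \<subseteq> S" "trivially_attacked \<subseteq> A"
  shows "consolidated V S w \<theta> e (consolidated_attack A)"
  unfolding consolidated_def attacked_consolidated_attack[OF assms]
  by (auto simp: consolidated_attack_enumeration consolidation_weight_def frac_def Let_def)

lemma total_cost_consolidated_attack:
  assumes "A \<subseteq> S" "trivially_attacked \<subseteq> A"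
  shows "total_cost V S \<sigma> w \<theta> (consolidated_attack A)
     = (\<Sum>i=1..card V. min stake (consolidation_weight (threshold * real (card V)) i * sum alloc A))"
proof -
  have "(\<Sum>s\<in>A. consolidated_attack A (e i) s)
      = consolidation_weight (threshold * real (card V)) i * sum alloc A" if "i \<in> {1..card V}" for i
    using that assms(1)
    by (auto simp: consolidated_attack_enumeration threshold_eq alloc_eq enumeration_in_V
        sum_distrib_left intro!: sum.cong)
  then show ?thesis
    unfolding total_cost_def validator_cost_def attacked_consolidated_attack[OF assms]
      sum_V_enumeration
    by (auto simp: stake_eq enumeration_in_V intro!: sum.cong)
qed

lemma level_le_attack_weight:
  assumes "is_attack V S w \<alpha>" and T: "T = attacked V S w \<theta> \<alpha>" "T \<subseteq> A" "A \<subseteq> T \<union> trivially_attacked"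
  shows "threshold * real (card V) * sum alloc A \<le> (\<Sum>v\<in>V. \<Sum>s\<in>T. \<alpha> v s)"
proof -
  have "A \<subseteq> S" using T by (auto simp: attacked_def trivially_attacked_def)
  then have "finite A" using finite_S finite_subset by blast
  have level: "threshold * real (card V) * alloc s = \<theta> s * (\<Sum>v\<in>V. w v s)" if "s \<in> S" for s
    using that by (simp add: threshold_eq sum_alloc_V)
  have "threshold * real (card V) * sum alloc A
      = (\<Sum>s\<in>A-T. threshold * real (card V) * alloc s) + (\<Sum>s\<in>T. threshold * real (card V) * alloc s)"
    using sum.subset_diff[OF \<open>T \<subseteq> A\<close> \<open>finite A\<close>] by (simp add: sum_distrib_left)
  also have "\<dots> \<le> 0 + (\<Sum>s\<in>T. \<Sum>v\<in>V. \<alpha> v s)"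
    using T \<open>A \<subseteq> S\<close>
    by (intro add_mono sum_nonpos sum_mono)
       (auto simp: level subset_eq trivially_attacked_def attacked_def)
  finally show ?thesis by (simp add: sum.swap[of _ T])
qed

lemma total_cost_ge_consolidated:
  assumes "is_attack V S w \<alpha>" and T: "T = attacked V S w \<theta> \<alpha>" "T \<subseteq> A" "A \<subseteq> T \<union> trivially_attacked"
    and "A \<noteq> {}"
  shows "(\<Sum>i=1..card V. min stake (consolidation_weight (threshold * real (card V)) i * sum alloc A))
     \<le> total_cost V S \<sigma> w \<theta> \<alpha>"
proof -
  define t where "t = threshold * real (card V)"
  define x where "x v = (\<Sum>s\<in>T. \<alpha> v s)" for v
  have "A \<subseteq> S" "T \<subseteq> S" using T by (auto simp: attacked_def trivially_attacked_def)
  obtain s where "s \<in> S" using \<open>A \<subseteq> S\<close> \<open>A \<noteq> {}\<close> by blast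
  then have t: "0 \<le> t" "t \<le> real (card V)"
    using level_bounds[of s] threshold_eq[of s] by (simp_all add: t_def)
  have "0 \<le> sum alloc A" using \<open>A \<subseteq> S\<close> alloc_nonneg by (auto intro: sum_nonneg)
  have x: "\<forall>v\<in>V. 0 \<le> x v \<and> x v \<le> sum alloc A"
  proof
    fix v assume "v \<in> V"
    have "x v \<le> sum alloc T"
      using assms(1) \<open>T \<subseteq> S\<close> \<open>v \<in> V\<close> by (auto simp: x_def is_attack_def alloc_eq intro!: sum_mono)
    also have "\<dots> \<le> sum alloc A"
      using \<open>A \<subseteq> S\<close> \<open>T \<subseteq> A\<close> finite_S alloc_nonneg by (intro sum_mono2) (auto intro: finite_subset)
    finally show "0 \<le> x v \<and> x v \<le> sum alloc A"
      using assms(1) \<open>T \<subseteq> S\<close> \<open>v \<in> V\<close> by (auto simp: x_def is_attack_def intro: sum_nonneg)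
  qed
  have "(real (nat \<lfloor>t\<rfloor>) + frac t) * sum alloc A \<le> (\<Sum>v\<in>V. x v)"
    using level_le_attack_weight[OF assms(1-4)] t(1) by (simp add: t_def x_def frac_def)
  then have "real (nat \<lfloor>t\<rfloor>) * min stake (sum alloc A) + min stake (frac t * sum alloc A)
      \<le> (\<Sum>v\<in>V. min stake (x v))"
    using sum_truncated_ge_saturated[OF finite_V x stake_nonneg \<open>0 \<le> sum alloc A\<close>]
    by (simp add: frac_ge_0 less_imp_le[OF frac_lt_1])
  also have "\<dots> = total_cost V S \<sigma> w \<theta> \<alpha>"
    by (simp add: total_cost_def validator_cost_def x_def T stake_eq)
  finally show ?thesis
    using sum_consolidation_weight[OF t, of "\<lambda>y. min stake (y * sum alloc A)"] stake_nonneg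
    by (simp add: t_def)
qed

lemma prize_mono:
  assumes "attacked V S w \<theta> \<alpha> \<subseteq> attacked V S w \<theta> \<alpha>'"
  shows "prize V S w \<theta> \<pi> \<alpha> \<le> prize V S w \<theta> \<pi> \<alpha>'"
proof -
  have "attacked V S w \<theta> \<alpha>' \<subseteq> S" by (auto simp: attacked_def)
  moreover have "\<forall>s\<in>S. 0 \<le> \<pi> s" using network by (auto simp: restaking_network_def less_imp_le)
  ultimately show ?thesis
    unfolding prize_def using assms finite_S finite_subset by (intro sum_mono2) auto
qed

end

theorem mainTheorem15:
  fixes V :: "'v set" and S :: "'s set" and \<sigma> :: "'v \<Rightarrow> real"
    and w :: "'v \<Rightarrow> 's \<Rightarrow> real" and \<theta> :: "'s \<Rightarrow> real" and \<pi> :: "'s \<Rightarrow> real"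
    and \<beta> :: real and e :: "nat \<Rightarrow> 'v"
  assumes "restaking_network V S \<sigma> w \<theta> \<pi>"
    and "symmetric_network V S \<sigma> w \<theta>"
    and "\<beta> \<ge> 0"
    and "bij_betw e {1..card V} V"
    and "\<exists>\<alpha>. beta_costly \<beta> V S \<sigma> w \<theta> \<pi> \<alpha>"
  shows "\<exists>\<alpha>. beta_costly \<beta> V S \<sigma> w \<theta> \<pi> \<alpha> \<and> consolidated V S w \<theta> e \<alpha>"
proof -
  interpret symmetric_restaking V S \<sigma> w \<theta> \<pi> e
    using assms(1,2,4) by unfold_locales
  obtain \<alpha> where \<alpha>: "beta_costly \<beta> V S \<sigma> w \<theta> \<pi> \<alpha>" using assms(5) by blast
  define T where "T = attacked V S w \<theta> \<alpha>"
  define A where "A = T \<union> trivially_attacked"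
  have "T \<noteq> {}" "is_attack V S w \<alpha>" using \<alpha> by (auto simp: beta_costly_def T_def)
  have A: "A \<subseteq> S" "trivially_attacked \<subseteq> A"
    by (auto simp: A_def T_def attacked_def trivially_attacked_def)
  have "total_cost V S \<sigma> w \<theta> (consolidated_attack A) \<le> total_cost V S \<sigma> w \<theta> \<alpha>"
    unfolding total_cost_consolidated_attack[OF A]
    using total_cost_ge_consolidated[OF \<open>is_attack V S w \<alpha>\<close> T_def] \<open>T \<noteq> {}\<close> by (auto simp: A_def)
  moreover have "prize V S w \<theta> \<pi> \<alpha> \<le> prize V S w \<theta> \<pi> (consolidated_attack A)"
    using prize_mono attacked_consolidated_attack[OF A] by (simp add: A_def T_def)
  ultimately have "beta_costly \<beta> V S \<sigma> w \<theta> \<pi> (consolidated_attack A)"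
    using \<alpha> \<open>T \<noteq> {}\<close> is_attack_consolidated_attack attacked_consolidated_attack[OF A]
    by (auto simp: beta_costly_def A_def)
  then show ?thesis using consolidated_consolidated_attack[OF A] by blast
qed

end
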